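(* Consider the network model, interest-based mobility model and FirstMeeting (FM) routing described in the context, with $\delta=\delta(n)>0$, $\delta(n)\to 0$. Let $T^{ib}_{FM}$ be the time at which the message is first delivered to $D$. Then there exist constants $c,c'>0$ (independent of $n$) such that for all sufficiently large $n$, $$\mathbb{E}[T^{ib}_{FM}] \ge \min\Big\{c\log(1/\delta(n)),\ \frac{c' n}{\log n}\Big\}.$$ In particular $\mathbb{E}[T^{ib}_{FM}]\to\infty$ as $n\to\infty$.
   Context: Network: fix an integer $m\ge 2$ independent of $n$. There are $n+2$ nodes: a source $S$, a destination $D$ and relays $R_1,\dots,R_n$. Each node $X$ has an interest profile, a unit vector in the closed positive orthant of the unit sphere of $\mathbb{R}^m$; $\angle(X,Y)$ denotes the angle between two profiles, so $\cos\angle(X,Y)=\langle X,Y\rangle\in[0,1]$. $S=(1,0,\dots,0)$ and $D=(0,1,0,\dots,0)$. The relay profiles are i.i.d.: the angle $\alpha_i=\angle(S,R_i)$ is uniform on $[0,\pi/2]$, and given $\alpha_i$, $R_i$ is uniform among unit vectors of the positive orthant making angle $\alpha_i$ with $S$. Profiles do not change in time. Conditional on the profiles, for each unordered pair $\{A,B\}$ of nodes the meeting instants of $A$ and $B$ form a Poisson process of rate $\lambda_{AB}$ (so the first meeting time is exponential with rate $\lambda_{AB}$), independently over pairs, starting at time $0$. Interest-based mobility: $\lambda_{AB}=k\cos\angle(A,B)+\delta$, where $\lambda>0$ is a fixed constant, $\delta=\delta(n)>0$ with $\delta(n)\to 0$, and $k=\frac{\pi}{2}(\lambda-\delta)$ (so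 that $\mathbb{E}[\lambda_{SR_i}]=\lambda$). FM routing: $S$ holds two copies of a message for $D$ and always keeps one. If the first node met by $S$ among $\{D,R_1,\dots,R_n\}$ is $D$, the message is delivered at that time. Otherwise, if it is $R_j$, the second copy is given to $R_j$; no further copies are created or transferred, and the message is delivered when the first of $S,R_j$ meets $D$. Expectations are over both the random profiles and the meeting processes. *)

theory Defs
  imports "HOL-Probability.Probability"
begin

text \<open>Interest profiles live in R^m, represented as functions nat => real
  (only coordinates j < m are relevant). Nodes are numbered: 0 = S, 1 = D,
  i+2 = relay R_i (i < n).\<close>

definition sq_norm :: "nat \<Rightarrow> (nat \<Rightarrow> real) \<Rightarrow> real" where
  "sq_norm d x = (\<Sum>j<d. (x j)^2)"

definition inner_m :: "nat \<Rightarrow> (nat \<Rightarrow> real) \<Rightarrow> (nat \<Rightarrow> real) \<Rightarrow> real" where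
  "inner_m d x y = (\<Sum>j<d. x j * y j)"

definition angle_dist :: "real measure" where
  "angle_dist = uniform_measure lborel {0..pi/2}"

definition pos_ball :: "nat \<Rightarrow> (nat \<Rightarrow> real) set" where
  "pos_ball d = {x \<in> space (PiM {..<d} (\<lambda>_. lborel)). (\<forall>j<d. 0 \<le> x j) \<and> sq_norm d x \<le> 1}"

text \<open>Uniform (normalized surface) measure on the positive orthant of the unit
  sphere of R^d, via the cone-measure construction: radial projection of the
  normalized Lebesgue measure on the positive part of the unit ball.\<close>
definition orth_sphere_uniform :: "nat \<Rightarrow> (nat \<Rightarrow> real) measure" where
  "orth_sphere_uniform d =
     distr (uniform_measure (PiM {..<d} (\<lambda>_. lborel)) (pos_ball d))
           (PiM {..<d} (\<lambda>_. lborel))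
           (\<lambda>x. \<lambda>j\<in>{..<d}. x j / sqrt (sq_norm d x))"

text \<open>Given alpha and v uniform on the positive orthant of the unit sphere of
  R^(m-1), the vector (cos alpha, sin alpha * v) is uniform among the unit vectors
  of the positive orthant of R^m making angle alpha with S = e_0.\<close>
definition relay_profile :: "real \<Rightarrow> (nat \<Rightarrow> real) \<Rightarrow> nat \<Rightarrow> real" where
  "relay_profile \<alpha> v = (\<lambda>j. if j = 0 then cos \<alpha> else sin \<alpha> * v (j - 1))"

definition profile :: "(nat \<Rightarrow> real \<times> (nat \<Rightarrow> real)) \<Rightarrow> nat \<Rightarrow> nat \<Rightarrow> real" where
  "profile P a =
     (if a = 0 then (\<lambda>j. if j = 0 then 1 else 0)
      else if a = 1 then (\<lambda>j. if j = 1 then 1 else 0)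
      else relay_profile (fst (P (a - 2))) (snd (P (a - 2))))"

text \<open>Meeting rate lambda_AB = k cos angle(A,B) + delta with k = pi/2 (lam - delta).\<close>
definition rate :: "nat \<Rightarrow> real \<Rightarrow> real \<Rightarrow> (nat \<Rightarrow> real \<times> (nat \<Rightarrow> real)) \<Rightarrow> nat \<Rightarrow> nat \<Rightarrow> real" where
  "rate m lam dl P a b = pi / 2 * (lam - dl) * inner_m m (profile P a) (profile P b) + dl"

definition node_pairs :: "nat \<Rightarrow> (nat \<times> nat) set" where
  "node_pairs n = {(a, b). a < b \<and> b < n + 2}"

definition exp1 :: "real measure" where
  "exp1 = density lborel (exponential_density 1)"

text \<open>A Poisson process of rate r: meeting instants are the partial sums of the
  i.i.d. Exp(1) variables e, scaled by 1/r.\<close>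
definition meeting_times :: "real \<Rightarrow> (nat \<Rightarrow> real) \<Rightarrow> real set" where
  "meeting_times r e = {(\<Sum>l\<le>k. e l) / r | k. True}"

definition first_meeting_after :: "real \<Rightarrow> (nat \<Rightarrow> real) \<Rightarrow> real \<Rightarrow> real" where
  "first_meeting_after r e t = Inf {s \<in> meeting_times r e. t \<le> s}"

definition pair_noise :: "((nat \<times> nat) \<times> nat \<Rightarrow> real) \<Rightarrow> nat \<Rightarrow> nat \<Rightarrow> nat \<Rightarrow> real" where
  "pair_noise E a b = (\<lambda>l. E ((min a b, max a b), l))"

text \<open>Sample space for n relays: i.i.d. relay profile data, and for each pair
  independent unit exponentials driving its meeting process.\<close>
definition Omega :: "nat \<Rightarrow> nat \<Rightarrow>
    ((nat \<Rightarrow> real \<times> (nat \<Rightarrow> real)) \<times> ((nat \<times> nat) \<times> nat \<Rightarrow> real)) measure" where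
  "Omega m n =
     PiM {..<n} (\<lambda>_. angle_dist \<Otimes>\<^sub>M orth_sphere_uniform (m - 1))
     \<Otimes>\<^sub>M PiM (node_pairs n \<times> UNIV) (\<lambda>_. exp1)"

definition meet :: "nat \<Rightarrow> real \<Rightarrow> real \<Rightarrow>
    (nat \<Rightarrow> real \<times> (nat \<Rightarrow> real)) \<Rightarrow> ((nat \<times> nat) \<times> nat \<Rightarrow> real) \<Rightarrow> nat \<Rightarrow> nat \<Rightarrow> real \<Rightarrow> real" where
  "meet m lam dl P E a b t = first_meeting_after (rate m lam dl P a b) (pair_noise E a b) t"

definition fm_delivery_time :: "nat \<Rightarrow> real \<Rightarrow> real \<Rightarrow> nat \<Rightarrow>
    (nat \<Rightarrow> real \<times> (nat \<Rightarrow> real)) \<times> ((nat \<times> nat) \<times> nat \<Rightarrow> real) \<Rightarrow> real" where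
  "fm_delivery_time m lam dl n \<omega> =
     (let P = fst \<omega>; E = snd \<omega>;
          fm = (\<lambda>b. meet m lam dl P E 0 b 0);
          T1 = Min (fm ` {1..n+1})
      in if fm 1 = T1 then T1
         else (let j = (SOME b. b \<in> {2..n+1} \<and> fm b = T1)
               in min (meet m lam dl P E 0 1 T1) (meet m lam dl P E j 1 T1)))"

definition expected_fm_time :: "nat \<Rightarrow> real \<Rightarrow> (nat \<Rightarrow> real) \<Rightarrow> nat \<Rightarrow> ennreal" where
  "expected_fm_time m lam \<delta> n =
     (\<integral>\<^sup>+ \<omega>. ennreal (fm_delivery_time m lam (\<delta> n) n \<omega>) \<partial>Omega m n)"

end

theory Submission
  imports Defs
begin

text \<open>Once S hands its second copy to a relay R whose angle to S is about a, the copy kept by S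
  reaches D at rate \<delta> and the relay's copy at rate at most k a + \<delta>, so delivery takes about
  1/(k a + \<delta>). Split the angles into dyadic bands a = 2^(-s), s = 0, ..., log2(1/\<delta>). Relay i
  lies in band s with probability about a, and with probability bounded below it is the relay
  that S meets first, within time t \<approx> 1/(n k), while no other contact interferes; these events
  are disjoint in (i, s). Each contributes about n t a / (k a + \<delta>) \<approx> 1/k to the expected
  delivery time as long as \<delta> \<le> k a, so summing over the bands gives E[T] \<ge> c log(1/\<delta>).
  This bound alone yields the stated minimum, for any c'.\<close>

section \<open>Meeting rates and the delivery time of FirstMeeting routing\<close>

lemma first_meeting_after_eq_first_contact:
  assumes "0 < r" "\<forall>l. 0 \<le> e l" "t \<le> e 0 / r"
  shows "first_meeting_after r e t = e 0 / r"
  unfolding first_meeting_after_def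
proof (rule cInf_eq_minimum)
  show "e 0 / r \<in> {s \<in> meeting_times r e. t \<le> s}"
    using assms unfolding meeting_times_def by (auto intro!: exI[of _ 0])
  fix y assume "y \<in> {s \<in> meeting_times r e. t \<le> s}"
  then obtain k where y: "y = (\<Sum>l\<le>k. e l) / r" unfolding meeting_times_def by auto
  have "e 0 \<le> (\<Sum>l\<le>k. e l)"
    using member_le_sum[of 0 "{..k}" e] assms(2) by auto
  then show "e 0 / r \<le> y" using y assms(1) by (simp add: divide_right_mono)
qed

lemma meet_eq_first_contact:
  assumes "a < b" "0 < rate m lam dl P a b" "\<forall>l. 0 \<le> E ((a, b), l)"
    and "t \<le> E ((a, b), 0) / rate m lam dl P a b"
  shows "meet m lam dl P E a b t = E ((a, b), 0) / rate m lam dl P a b"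
  using assms unfolding meet_def pair_noise_def
  by (simp add: first_meeting_after_eq_first_contact)

lemma rate_commute: "rate m lam dl P a b = rate m lam dl P b a"
  unfolding rate_def inner_m_def by (simp add: mult.commute)

lemma meet_commute: "meet m lam dl P E a b t = meet m lam dl P E b a t"
  unfolding meet_def pair_noise_def by (simp add: rate_commute min.commute max.commute)

lemma inner_m_unit_left:
  "j < d \<Longrightarrow> inner_m d (\<lambda>k. if k = j then 1 else 0) y = y j"
  unfolding inner_m_def by (simp add: if_distrib[of "\<lambda>c. c * _"] cong: if_cong)

lemma inner_m_unit_right:
  "j < d \<Longrightarrow> inner_m d y (\<lambda>k. if k = j then 1 else 0) = y j"
  unfolding inner_m_def by (simp add: if_distrib[of "\<lambda>c. _ * c"] cong: if_cong)

definition rate_coeff :: "real \<Rightarrow> real \<Rightarrow> real" where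
  "rate_coeff lam dl = pi/2 * (lam - dl)"

lemma rate_source_dest: "2 \<le> m \<Longrightarrow> rate m lam dl P 0 1 = dl"
  unfolding rate_def profile_def by (simp add: inner_m_unit_left)

lemma rate_source_relay:
  "2 \<le> m \<Longrightarrow> rate m lam dl P 0 (k + 2) = rate_coeff lam dl * cos (fst (P k)) + dl"
  unfolding rate_def profile_def rate_coeff_def by (simp add: inner_m_unit_left relay_profile_def)

lemma rate_relay_dest:
  "2 \<le> m \<Longrightarrow> rate m lam dl P (k + 2) 1 = rate_coeff lam dl * (sin (fst (P k)) * snd (P k) 0) + dl"
  unfolding rate_def profile_def rate_coeff_def by (simp add: inner_m_unit_right relay_profile_def)

lemma rate_source_relay_bounds:
  assumes "2 \<le> m" "0 \<le> rate_coeff lam dl" "0 \<le> fst (P k)" "fst (P k) \<le> pi/2"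
  shows "dl \<le> rate m lam dl P 0 (k + 2)" "rate m lam dl P 0 (k + 2) \<le> rate_coeff lam dl + dl"
proof -
  have "0 \<le> cos (fst (P k))" using assms by (intro cos_ge_zero) auto
  then show "dl \<le> rate m lam dl P 0 (k + 2)" "rate m lam dl P 0 (k + 2) \<le> rate_coeff lam dl + dl"
    unfolding rate_source_relay[OF assms(1)] using assms(2) by (auto simp: mult_left_le)
qed

lemma cos_ge_half: "0 \<le> (x::real) \<Longrightarrow> x \<le> 1 \<Longrightarrow> 1/2 \<le> cos x"
  using cos_monotone_0_pi_le[of x "pi/3"] pi_gt3 by (simp add: cos_60)

lemma rate_source_relay_ge_half:
  assumes "2 \<le> m" "0 \<le> rate_coeff lam dl" "0 \<le> fst (P k)" "fst (P k) \<le> 1"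
  shows "rate_coeff lam dl / 2 + dl \<le> rate m lam dl P 0 (k + 2)"
  using mult_left_mono[OF cos_ge_half[OF assms(3,4)] assms(2)]
  unfolding rate_source_relay[OF assms(1)] by simp

lemma rate_relay_dest_bounds:
  assumes "2 \<le> m" "0 \<le> rate_coeff lam dl" "0 \<le> fst (P k)" "fst (P k) \<le> pi/2"
    "fst (P k) \<le> a" "0 \<le> snd (P k) 0" "snd (P k) 0 \<le> 1"
  shows "dl \<le> rate m lam dl P (k + 2) 1" "rate m lam dl P (k + 2) 1 \<le> rate_coeff lam dl * a + dl"
proof -
  have sin: "0 \<le> sin (fst (P k))" "sin (fst (P k)) \<le> a"
    using assms(3-5) sin_x_le_x[of "fst (P k)"] by (auto intro!: sin_ge_zero)
  then have "0 \<le> sin (fst (P k)) * snd (P k) 0" "sin (fst (P k)) * snd (P k) 0 \<le> a"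
    using assms(6,7) mult_left_le[of "snd (P k) 0" "sin (fst (P k))"] by auto
  then show "dl \<le> rate m lam dl P (k + 2) 1" "rate m lam dl P (k + 2) 1 \<le> rate_coeff lam dl * a + dl"
    unfolding rate_relay_dest[OF assms(1)] using assms(2) by (auto intro: mult_left_mono)
qed

lemma fm_delivery_time_via_first_relay:
  assumes "i < n" and "T = meet m lam dl P E 0 (i + 2) 0"
    and first: "\<forall>b\<in>{1..n+1}. b \<noteq> i + 2 \<longrightarrow> T < meet m lam dl P E 0 b 0"
  shows "fm_delivery_time m lam dl n (P, E)
           = min (meet m lam dl P E 0 1 T) (meet m lam dl P E (i + 2) 1 T)"
proof -
  define fm where "fm b = meet m lam dl P E 0 b 0" for b
  have "Min (fm ` {1..n+1}) = T"
    using assms unfolding fm_def by (intro Min_eqI) (auto simp: less_imp_le)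
  moreover have "fm 1 \<noteq> T" using first unfolding fm_def by auto
  moreover have "(SOME b. b \<in> {2..n+1} \<and> fm b = T) = i + 2"
    using assms unfolding fm_def by (intro some_equality) auto
  ultimately show ?thesis
    unfolding fm_delivery_time_def Let_def fm_def by simp
qed

lemma meet_source_dest:
  assumes "2 \<le> m" "0 < dl" "\<forall>l. 0 \<le> E ((0, 1), l)" "s \<le> E ((0, 1), 0) / dl"
  shows "meet m lam dl P E 0 1 s = E ((0, 1), 0) / dl"
  using assms meet_eq_first_contact[of 0 1 m lam dl P E s] unfolding rate_source_dest[OF assms(1)]
  by simp

lemma source_meets_relay_first:
  fixes P :: "nat \<Rightarrow> real \<times> (nat \<Rightarrow> real)" and E :: "(nat \<times> nat) \<times> nat \<Rightarrow> real"
    and lam dl :: real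
  defines "K \<equiv> rate_coeff lam dl"
  assumes m: "2 \<le> m" and K: "0 < K" and dl: "0 < dl" and i: "i < n"
    and t: "0 < t" "t \<le> 1 / (K + dl)"
    and angles: "\<forall>k<n. 0 \<le> fst (P k) \<and> fst (P k) \<le> pi/2" "fst (P i) \<le> 1"
    and noise: "\<forall>p\<in>node_pairs n. \<forall>l. 0 \<le> E (p, l)"
    and e01: "1 < E ((0, 1), 0)" and e0i: "E ((0, i + 2), 0) \<le> K * t / 2"
    and e0k: "\<forall>k\<in>{2..n+1}. k \<noteq> i + 2 \<longrightarrow> (K + dl) * t < E ((0, k), 0)"
  shows "meet m lam dl P E 0 (i + 2) 0 \<le> t"
    and "b \<in> {1..n+1} \<Longrightarrow> b \<noteq> i + 2 \<Longrightarrow> t < meet m lam dl P E 0 b 0"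
proof -
  have rate_relay: "dl \<le> rate m lam dl P 0 (k + 2)" "rate m lam dl P 0 (k + 2) \<le> K + dl"
    if "k < n" for k
    using rate_source_relay_bounds[OF m, of lam dl P k] angles that K unfolding K_def by auto
  have meet_relay: "meet m lam dl P E 0 (k + 2) 0 = E ((0, k + 2), 0) / rate m lam dl P 0 (k + 2)"
    if "k < n" for k
    using rate_relay[OF that] noise that dl unfolding node_pairs_def
    by (intro meet_eq_first_contact) auto
  have "K / 2 \<le> rate m lam dl P 0 (i + 2)"
    using rate_source_relay_ge_half[OF m, of lam dl P i] angles i K dl unfolding K_def by force
  then have "E ((0, i + 2), 0) / rate m lam dl P 0 (i + 2) \<le> (K * t / 2) / (K / 2)"
    using e0i noise i K t unfolding node_pairs_def by (intro frac_le) auto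
  then show "meet m lam dl P E 0 (i + 2) 0 \<le> t" using meet_relay[OF i] K by simp
  assume b: "b \<in> {1..n+1}" "b \<noteq> i + 2"
  show "t < meet m lam dl P E 0 b 0"
  proof (cases "b = 1")
    case True
    have "1 / (K + dl) < 1 / dl" using K dl by (intro divide_strict_left_mono) auto
    moreover have "1 / dl < E ((0, 1), 0) / dl" using e01 dl by (intro divide_strict_right_mono) auto
    ultimately show ?thesis
      using True t meet_source_dest[OF m dl, of E 0] noise unfolding node_pairs_def by auto
  next
    case False
    define k where "k = b - 2"
    have k: "b = k + 2" "k < n" using b False unfolding k_def by auto
    have "(K + dl) * t / rate m lam dl P 0 (k + 2) < E ((0, k + 2), 0) / rate m lam dl P 0 (k + 2)"
      using e0k rate_relay[OF k(2)] k b dl by (intro divide_strict_right_mono) auto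
    moreover have "t \<le> (K + dl) * t / rate m lam dl P 0 (k + 2)"
      using rate_relay[OF k(2)] t dl by (simp add: le_divide_eq mult_right_mono)
    ultimately show ?thesis using meet_relay[OF k(2)] k by simp
  qed
qed

lemma fm_delivery_time_ge_on_event:
  fixes P :: "nat \<Rightarrow> real \<times> (nat \<Rightarrow> real)" and E :: "(nat \<times> nat) \<times> nat \<Rightarrow> real"
    and lam dl :: real
  defines "K \<equiv> rate_coeff lam dl"
  assumes m: "2 \<le> m" and K: "0 < K" and dl: "0 < dl" and i: "i < n"
    and t: "0 < t" "t \<le> 1 / (K + dl)"
    and angles: "\<forall>k<n. 0 \<le> fst (P k) \<and> fst (P k) \<le> pi/2"
    and ai: "fst (P i) \<le> a" "a \<le> 1" and v: "0 \<le> snd (P i) 0" "snd (P i) 0 \<le> 1"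
    and noise: "\<forall>p\<in>node_pairs n. \<forall>l. 0 \<le> E (p, l)"
    and e01: "1 < E ((0, 1), 0)" and e1i: "1 < E ((1, i + 2), 0)"
    and e0i: "E ((0, i + 2), 0) \<le> K * t / 2"
    and e0k: "\<forall>k\<in>{2..n+1}. k \<noteq> i + 2 \<longrightarrow> (K + dl) * t < E ((0, k), 0)"
  shows "1 / (K * a + dl) \<le> fm_delivery_time m lam dl n (P, E)"
proof -
  define T where "T = meet m lam dl P E 0 (i + 2) 0"
  note first = source_meets_relay_first[OF m K[unfolded K_def] dl i t[unfolded K_def] angles _ noise e01
      e0i[unfolded K_def] e0k[unfolded K_def], folded T_def]
  have T: "T \<le> t" "\<forall>b\<in>{1..n+1}. b \<noteq> i + 2 \<longrightarrow> T < meet m lam dl P E 0 b 0"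
    using first ai by (auto intro: order.strict_trans1)
  define rD where "rD = rate m lam dl P (i + 2) 1"
  have rD: "dl \<le> rD" "rD \<le> K * a + dl"
    using rate_relay_dest_bounds[OF m, of lam dl P i a] angles i ai v K unfolding K_def rD_def by auto
  have "K * a \<le> K" using K ai by (simp add: mult_left_le)
  then have "1 / (K + dl) \<le> 1 / rD" using rD dl by (intro divide_left_mono) auto
  moreover have "1 / rD < E ((1, i + 2), 0) / rD" using e1i rD dl by (intro divide_strict_right_mono) auto
  ultimately have relay_late: "T \<le> E ((1, i + 2), 0) / rD" using T t by linarith
  have relay_meet: "meet m lam dl P E (i + 2) 1 T = E ((1, i + 2), 0) / rD"
    using meet_eq_first_contact[of 1 "i + 2" m lam dl P E T] relay_late rD dl noise i
    unfolding meet_commute[of _ _ _ _ _ "i + 2"] rD_def rate_commute[of _ _ _ _ "i + 2"] node_pairs_def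
    by simp
  have noise01: "\<forall>l. 0 \<le> E ((0, 1), l)" using noise unfolding node_pairs_def by auto
  have "meet m lam dl P E 0 1 0 = E ((0, 1), 0) / dl"
    using meet_source_dest[OF m dl noise01] e01 dl by simp
  then have "T \<le> E ((0, 1), 0) / dl" using T first(2)[of 1] ai by simp
  then have dest_meet: "meet m lam dl P E 0 1 T = E ((0, 1), 0) / dl"
    by (rule meet_source_dest[OF m dl noise01])
  have "1 / (K * a + dl) \<le> E ((1, i + 2), 0) / rD" "1 / (K * a + dl) \<le> E ((0, 1), 0) / dl"
    using rD dl e01 e1i by (auto intro: frac_le)
  then show ?thesis
    using fm_delivery_time_via_first_relay[OF i T_def T(2)] relay_meet dest_meet by simp
qed

section \<open>The distributions of the model\<close>

lemma prob_space_exp1: "prob_space exp1"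
  unfolding exp1_def by (rule prob_space_exponential_density) simp

lemma sets_exp1 [simp, measurable_cong]: "sets exp1 = sets lborel"
  unfolding exp1_def by simp

lemma space_exp1 [simp]: "space exp1 = UNIV"
  unfolding exp1_def by simp

lemma distributed_exp1: "distributed exp1 lborel (\<lambda>x. x) (exponential_density 1)"
  unfolding distributed_def
proof (intro conjI)
  show "distr exp1 lborel (\<lambda>x. x) = density lborel (exponential_density 1)"
    unfolding exp1_def by (rule distr_id2) simp
qed (simp_all add: measurable_ident_sets)

lemma emeasure_exp1_greaterThan: "0 \<le> a \<Longrightarrow> emeasure exp1 {a<..} = ennreal (exp (- a))"
proof -
  assume a: "0 \<le> a"
  interpret prob_space exp1 by (rule prob_space_exp1)
  have "prob {x \<in> space exp1. a < x} = exp (- a * 1)"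
    by (rule exponential_distributedD_gt[OF distributed_exp1 a]) simp
  then show ?thesis by (simp add: emeasure_eq_measure greaterThan_def)
qed

lemma emeasure_exp1_atMost: "0 \<le> a \<Longrightarrow> emeasure exp1 {..a} = ennreal (1 - exp (- a))"
proof -
  assume a: "0 \<le> a"
  interpret prob_space exp1 by (rule prob_space_exp1)
  have "prob {x \<in> space exp1. x \<le> a} = 1 - exp (- a * 1)"
    by (rule exponential_distributedD_le[OF distributed_exp1 a]) simp
  then show ?thesis by (simp add: emeasure_eq_measure atMost_def)
qed

lemma AE_exp1_nonneg: "AE x in exp1. 0 \<le> x"
  unfolding exp1_def by (subst AE_density) (auto simp: exponential_density_def)

lemma prob_space_angle_dist: "prob_space angle_dist"
  unfolding angle_dist_def by (rule prob_space_uniform_measure) auto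

lemma sets_angle_dist [simp, measurable_cong]: "sets angle_dist = sets lborel"
  unfolding angle_dist_def by simp

lemma space_angle_dist [simp]: "space angle_dist = UNIV"
  unfolding angle_dist_def by simp

lemma emeasure_angle_dist_interval:
  assumes "0 \<le> x" "x \<le> y" "y \<le> pi/2"
  shows "emeasure angle_dist {x<..y} = ennreal (2 * (y - x) / pi)"
proof -
  have "{0..pi/2} \<inter> {x<..y} = {x<..y}" using assms by auto
  then have "emeasure angle_dist {x<..y} = ennreal (y - x) / ennreal (pi/2)"
    unfolding angle_dist_def using assms by (subst emeasure_uniform_measure) auto
  also have "\<dots> = ennreal (2 * (y - x) / pi)" using assms by (subst divide_ennreal) auto
  finally show ?thesis .
qed

lemma AE_angle_dist: "AE x in angle_dist. 0 \<le> x \<and> x \<le> pi/2"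
  unfolding angle_dist_def by (rule AE_uniform_measureI) auto

lemma sets_pos_ball: "pos_ball d \<in> sets (PiM {..<d} (\<lambda>_. lborel))"
  unfolding pos_ball_def sq_norm_def by measurable

lemma pos_ball_coordinate_bounds:
  assumes "x \<in> pos_ball d" "j < d"
  shows "0 \<le> x j" "x j \<le> sqrt (sq_norm d x)" "x j \<le> 1"
proof -
  have "(x j)^2 \<le> sq_norm d x" unfolding sq_norm_def using assms(2) by (intro member_le_sum) auto
  then show "0 \<le> x j" "x j \<le> sqrt (sq_norm d x)" "x j \<le> 1"
    using assms real_le_rsqrt[of "x j" "sq_norm d x"] unfolding pos_ball_def
    by (auto intro: order_trans)
qed

lemma pos_ball_subset_unit_cube: "pos_ball d \<subseteq> PiE {..<d} (\<lambda>_. {0..1::real})"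
  using pos_ball_coordinate_bounds
  by (force simp: pos_ball_def space_PiM PiE_iff)

lemma cube_subset_pos_ball: "1 \<le> d \<Longrightarrow> PiE {..<d} (\<lambda>_. {0..1/real d}) \<subseteq> pos_ball d"
proof
  fix x assume d: "1 \<le> d" and x: "x \<in> PiE {..<d} (\<lambda>_. {0..1/real d})"
  have "(\<Sum>j<d. (x j)^2) \<le> (\<Sum>j<d. 1/real d)"
  proof (intro sum_mono)
    fix j assume "j \<in> {..<d}"
    then have "0 \<le> x j" "x j \<le> 1/real d" using x by (auto simp: PiE_iff)
    moreover have "1/real d \<le> 1" using d by simp
    ultimately show "(x j)^2 \<le> 1/real d"
      using mult_mono[of "x j" "1/real d" "x j" 1] by (simp add: power2_eq_square)
  qed
  then show "x \<in> pos_ball d" using x d unfolding pos_ball_def sq_norm_def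
    by (auto simp: space_PiM PiE_iff)
qed

lemma emeasure_pos_ball_pos_finite:
  assumes "1 \<le> d"
  shows "emeasure (PiM {..<d} (\<lambda>_. lborel)) (pos_ball d) \<noteq> 0"
    and "emeasure (PiM {..<d} (\<lambda>_. lborel)) (pos_ball d) \<noteq> \<infinity>"
proof -
  interpret product_sigma_finite "\<lambda>_::nat. lborel :: real measure" by standard
  let ?L = "PiM {..<d} (\<lambda>_. lborel :: real measure)"
  have "emeasure ?L (pos_ball d) \<le> emeasure ?L (PiE {..<d} (\<lambda>_. {0..1}))"
    by (intro emeasure_mono[OF pos_ball_subset_unit_cube] sets_PiM_I_finite) auto
  then show "emeasure ?L (pos_ball d) \<noteq> \<infinity>" by (subst (asm) emeasure_PiM) (auto simp: top_unique)
  have "emeasure ?L (PiE {..<d} (\<lambda>_. {0..1/real d})) \<le> emeasure ?L (pos_ball d)"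
    using emeasure_mono[OF cube_subset_pos_ball[OF assms] sets_pos_ball] .
  then show "emeasure ?L (pos_ball d) \<noteq> 0"
    using assms by (subst (asm) emeasure_PiM) (auto simp: prod_ennreal ennreal_power)
qed

lemma prob_space_orth_sphere_uniform: "1 \<le> d \<Longrightarrow> prob_space (orth_sphere_uniform d)"
  unfolding orth_sphere_uniform_def
  by (intro prob_space.prob_space_distr prob_space_uniform_measure emeasure_pos_ball_pos_finite)
    (auto simp: sq_norm_def)

lemma AE_orth_sphere_uniform_coordinate:
  assumes "j < d"
  shows "AE v in orth_sphere_uniform d. 0 \<le> v j \<and> v j \<le> 1"
proof -
  let ?L = "PiM {..<d} (\<lambda>_. lborel :: real measure)"
  let ?f = "\<lambda>x. \<lambda>j\<in>{..<d}. x j / sqrt (sq_norm d x)"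
  have meas: "?f \<in> measurable (uniform_measure ?L (pos_ball d)) ?L"
    unfolding sq_norm_def by measurable
  have "AE x in uniform_measure ?L (pos_ball d). 0 \<le> ?f x j \<and> ?f x j \<le> 1"
  proof (rule AE_uniform_measureI[OF sets_pos_ball], rule AE_I2, rule impI)
    fix x assume "x \<in> pos_ball d"
    note bounds = pos_ball_coordinate_bounds[OF this assms]
    have "0 \<le> sq_norm d x" unfolding sq_norm_def by (simp add: sum_nonneg)
    then show "0 \<le> ?f x j \<and> ?f x j \<le> 1"
      using bounds assms by (cases "sq_norm d x = 0") (auto simp: divide_le_eq)
  qed
  moreover have "(\<lambda>x. x j) \<in> borel_measurable ?L"
    using measurable_component_singleton[of j "{..<d}" "\<lambda>_. lborel::real measure"] assms by simp
  then have "{x \<in> space ?L. 0 \<le> x j \<and> x j \<le> (1::real)} \<in> sets ?L" by measurable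
  ultimately show ?thesis unfolding orth_sphere_uniform_def
    by (subst AE_distr_iff[OF meas]) auto
qed

lemma AE_pair_fst:
  assumes "prob_space N" "AE x in M. P x"
  shows "AE z in M \<Otimes>\<^sub>M N. P (fst z)"
proof (rule AE_distrD[OF measurable_fst])
  interpret N: prob_space N by fact
  show "AE x in distr (M \<Otimes>\<^sub>M N) M fst. P x" unfolding N.distr_pair_fst by fact
qed

lemma distr_pair_snd:
  assumes "prob_space M" "prob_space N"
  shows "distr (M \<Otimes>\<^sub>M N) N snd = N"
proof (intro measure_eqI)
  interpret M: prob_space M by fact
  interpret N: prob_space N by fact
  fix A assume A: "A \<in> sets (distr (M \<Otimes>\<^sub>M N) N snd)"
  then have "emeasure (distr (M \<Otimes>\<^sub>M N) N snd) A = emeasure (M \<Otimes>\<^sub>M N) (space M \<times> A)"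
    by (auto simp: emeasure_distr space_pair_measure dest: sets.sets_into_space
        intro!: arg_cong2[where f = emeasure])
  with A show "emeasure (distr (M \<Otimes>\<^sub>M N) N snd) A = emeasure N A"
    by (simp add: N.emeasure_pair_measure_Times M.emeasure_space_1)
qed simp

lemma AE_pair_snd:
  assumes "prob_space M" "prob_space N" "AE y in N. P y"
  shows "AE z in M \<Otimes>\<^sub>M N. P (snd z)"
  by (rule AE_distrD[OF measurable_snd]) (unfold distr_pair_snd[OF assms(1,2)], fact)

definition profile_space :: "nat \<Rightarrow> nat \<Rightarrow> (nat \<Rightarrow> real \<times> (nat \<Rightarrow> real)) measure" where
  "profile_space m n = PiM {..<n} (\<lambda>_. angle_dist \<Otimes>\<^sub>M orth_sphere_uniform (m - 1))"

definition contact_space :: "nat \<Rightarrow> ((nat \<times> nat) \<times> nat \<Rightarrow> real) measure" where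
  "contact_space n = PiM (node_pairs n \<times> UNIV) (\<lambda>_. exp1)"

lemma Omega_eq_pair: "Omega m n = profile_space m n \<Otimes>\<^sub>M contact_space n"
  unfolding Omega_def profile_space_def contact_space_def ..

lemma prob_space_relay_profile:
  "2 \<le> m \<Longrightarrow> prob_space (angle_dist \<Otimes>\<^sub>M orth_sphere_uniform (m - 1))"
  by (intro prob_space_pair prob_space_angle_dist prob_space_orth_sphere_uniform) auto

lemma prob_space_profile_space: "2 \<le> m \<Longrightarrow> prob_space (profile_space m n)"
  unfolding profile_space_def by (intro prob_space_PiM prob_space_relay_profile)

lemma prob_space_contact_space: "prob_space (contact_space n)"
  unfolding contact_space_def by (intro prob_space_PiM prob_space_exp1)

definition regular_outcome ::
    "nat \<Rightarrow> (nat \<Rightarrow> real \<times> (nat \<Rightarrow> real)) \<times> ((nat \<times> nat) \<times> nat \<Rightarrow> real) \<Rightarrow> bool" where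
  "regular_outcome n \<omega> \<longleftrightarrow>
     (\<forall>k<n. 0 \<le> fst (fst \<omega> k) \<and> fst (fst \<omega> k) \<le> pi/2 \<and> 0 \<le> snd (fst \<omega> k) 0 \<and> snd (fst \<omega> k) 0 \<le> 1)
     \<and> (\<forall>p\<in>node_pairs n. \<forall>l. 0 \<le> snd \<omega> (p, l))"

lemma AE_regular_outcome: "2 \<le> m \<Longrightarrow> AE \<omega> in Omega m n. regular_outcome n \<omega>"
proof -
  assume m: "2 \<le> m"
  have "AE x in angle_dist \<Otimes>\<^sub>M orth_sphere_uniform (m - 1). 0 \<le> fst x \<and> fst x \<le> pi/2"
    using m by (intro AE_pair_fst AE_angle_dist prob_space_orth_sphere_uniform) auto
  moreover have "AE x in angle_dist \<Otimes>\<^sub>M orth_sphere_uniform (m - 1). 0 \<le> snd x 0 \<and> snd x 0 \<le> 1"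
    using m by (intro AE_pair_snd AE_orth_sphere_uniform_coordinate prob_space_orth_sphere_uniform
        prob_space_angle_dist) auto
  ultimately have relay: "AE x in angle_dist \<Otimes>\<^sub>M orth_sphere_uniform (m - 1).
      0 \<le> fst x \<and> fst x \<le> pi/2 \<and> 0 \<le> snd x 0 \<and> snd x 0 \<le> 1"
    by eventually_elim auto
  have "AE P in profile_space m n. k < n \<longrightarrow>
      0 \<le> fst (P k) \<and> fst (P k) \<le> pi/2 \<and> 0 \<le> snd (P k) 0 \<and> snd (P k) 0 \<le> 1" for k
    using m relay unfolding profile_space_def
    by (cases "k < n") (auto intro!: AE_PiM_component prob_space_relay_profile)
  then have profiles: "AE P in profile_space m n. \<forall>k<n.
      0 \<le> fst (P k) \<and> fst (P k) \<le> pi/2 \<and> 0 \<le> snd (P k) 0 \<and> snd (P k) 0 \<le> 1"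
    by (simp add: AE_all_countable)
  have "AE E in contact_space n. j \<in> node_pairs n \<times> UNIV \<longrightarrow> 0 \<le> E j" for j
    unfolding contact_space_def
    by (cases "j \<in> node_pairs n \<times> UNIV") (auto intro!: AE_PiM_component prob_space_exp1 AE_exp1_nonneg)
  then have "AE E in contact_space n. \<forall>j. j \<in> node_pairs n \<times> UNIV \<longrightarrow> 0 \<le> E j"
    by (simp add: AE_all_countable)
  then have contacts: "AE E in contact_space n. \<forall>p\<in>node_pairs n. \<forall>l. 0 \<le> E (p, l)"
    by eventually_elim auto
  show ?thesis
    using AE_pair_fst[OF prob_space_contact_space profiles]
      AE_pair_snd[OF prob_space_profile_space[OF m] prob_space_contact_space contacts]
    unfolding Omega_eq_pair regular_outcome_def by eventually_elim auto
qed

section \<open>Disjoint events at the dyadic angle scales\<close>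

definition angle_band_event :: "nat \<Rightarrow> nat \<Rightarrow> nat \<Rightarrow> real \<Rightarrow> (nat \<Rightarrow> real \<times> (nat \<Rightarrow> real)) set" where
  "angle_band_event m n i a =
     PiE {..<n} (\<lambda>k. (if k = i then {a/2<..a} else UNIV) \<times> space (orth_sphere_uniform (m - 1)))"

definition handover_contacts :: "nat \<Rightarrow> nat \<Rightarrow> ((nat \<times> nat) \<times> nat) set" where
  "handover_contacts n i = insert ((0, 1), 0) (insert ((1, i + 2), 0) ((\<lambda>k. ((0, k), 0)) ` {2..n+1}))"

definition handover_constraint :: "nat \<Rightarrow> real \<Rightarrow> real \<Rightarrow> (nat \<times> nat) \<times> nat \<Rightarrow> real set" where
  "handover_constraint i lo hi j =
     (if j = ((0, 1), 0) \<or> j = ((1, i + 2), 0) then {1<..}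
      else if j = ((0, i + 2), 0) then {..lo} else {hi<..})"

text \<open>A first contact of rate r happens at its unit exponential divided by r. On this event the
  unit exponentials of the first contacts S--D and R_i--D exceed 1, that of S--R_i is at most lo,
  and those of S with every other relay exceed hi.\<close>
definition handover_event :: "nat \<Rightarrow> nat \<Rightarrow> real \<Rightarrow> real \<Rightarrow> ((nat \<times> nat) \<times> nat \<Rightarrow> real) set" where
  "handover_event n i lo hi =
     prod_emb (node_pairs n \<times> UNIV) (\<lambda>_. exp1) (handover_contacts n i)
       (PiE (handover_contacts n i) (handover_constraint i lo hi))"

lemma handover_contacts_subset: "i < n \<Longrightarrow> handover_contacts n i \<subseteq> node_pairs n \<times> UNIV"
  unfolding handover_contacts_def node_pairs_def by auto

lemma sets_handover_event: "i < n \<Longrightarrow> handover_event n i lo hi \<in> sets (contact_space n)"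
  unfolding handover_event_def contact_space_def
  by (intro sets_PiM_I handover_contacts_subset) (auto simp: handover_constraint_def handover_contacts_def)

lemma sets_angle_band_event: "angle_band_event m n i a \<in> sets (profile_space m n)"
  unfolding angle_band_event_def profile_space_def by (intro sets_PiM_I_finite pair_measureI) auto

lemma mem_handover_event:
  "E \<in> handover_event n i lo hi \<Longrightarrow> j \<in> handover_contacts n i \<Longrightarrow> E j \<in> handover_constraint i lo hi j"
  unfolding handover_event_def prod_emb_def by (auto simp: PiE_iff)

lemma angle_band_event_angle:
  "P \<in> angle_band_event m n i a \<Longrightarrow> i < n \<Longrightarrow> a/2 < fst (P i) \<and> fst (P i) \<le> a"
  unfolding angle_band_event_def by (auto simp: PiE_iff dest!: bspec[of _ _ i])

lemma emeasure_angle_band_event: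
  assumes m: "2 \<le> m" and i: "i < n" and a: "0 < a" "a \<le> 1"
  shows "emeasure (profile_space m n) (angle_band_event m n i a) = ennreal (a / pi)"
proof -
  let ?M = "angle_dist \<Otimes>\<^sub>M orth_sphere_uniform (m - 1)"
  let ?A = "\<lambda>k. (if k = i then {a/2<..a} else UNIV) \<times> space (orth_sphere_uniform (m - 1))"
  interpret O: prob_space "orth_sphere_uniform (m - 1)"
    using m by (intro prob_space_orth_sphere_uniform) auto
  interpret A: prob_space angle_dist by (rule prob_space_angle_dist)
  interpret product_prob_space "\<lambda>_::nat. ?M"
    unfolding product_prob_space_def product_prob_space_axioms_def product_sigma_finite_def
    using prob_space_relay_profile[OF m] prob_space_imp_sigma_finite by blast
  have "a \<le> pi/2" using a pi_gt3 by linarith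
  then have "emeasure ?M (?A k) = (if k = i then ennreal (a / pi) else 1)" for k
    using emeasure_angle_dist_interval[of "a/2" a] a A.emeasure_space_1 O.emeasure_space_1
    by (subst O.emeasure_pair_measure_Times) auto
  then have "emeasure (profile_space m n) (angle_band_event m n i a)
      = (\<Prod>k<n. if k = i then ennreal (a / pi) else 1)"
    unfolding angle_band_event_def profile_space_def by (subst emeasure_PiM) auto
  then show ?thesis using i by simp
qed

lemma emeasure_handover_event:
  assumes i: "i < n" and lo: "0 \<le> lo" and hi: "0 \<le> hi"
  shows "emeasure (contact_space n) (handover_event n i lo hi)
           = ennreal (exp (-2) * (1 - exp (- lo)) * exp (- hi) ^ (n - 1))"
proof -
  let ?e = "\<lambda>j. emeasure exp1 (handover_constraint i lo hi j)"
  let ?relay = "\<lambda>k::nat. ((0::nat, k), 0::nat)"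
  have inj: "inj_on ?relay {2..n+1}" by (auto simp: inj_on_def)
  have others: "(\<Prod>k\<in>{2..n+1} - {i + 2}. ?e (?relay k)) = ennreal (exp (- hi)) ^ (n - 1)"
  proof -
    have "?e (?relay k) = ennreal (exp (- hi))" if "k \<in> {2..n+1} - {i + 2}" for k
      using that emeasure_exp1_greaterThan[OF hi] by (auto simp: handover_constraint_def)
    then show ?thesis using i by (simp add: card_Diff_singleton)
  qed
  have "emeasure (contact_space n) (handover_event n i lo hi) = (\<Prod>j\<in>handover_contacts n i. ?e j)"
    unfolding contact_space_def handover_event_def
    using i by (intro emeasure_PiM_emb prob_space_exp1 handover_contacts_subset)
      (auto simp: handover_contacts_def handover_constraint_def)
  also have "\<dots> = ?e ((0, 1), 0) * (?e ((1, i + 2), 0) * (\<Prod>j\<in>?relay ` {2..n+1}. ?e j))"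
    unfolding handover_contacts_def by (subst prod.insert; auto)+
  also have "(\<Prod>j\<in>?relay ` {2..n+1}. ?e j) = (\<Prod>k\<in>{2..n+1}. ?e (?relay k))"
    by (rule prod.reindex[OF inj, unfolded comp_def])
  also have "(\<Prod>k\<in>{2..n+1}. ?e (?relay k)) = ?e (?relay (i + 2)) * ennreal (exp (- hi)) ^ (n - 1)"
    using i others by (subst prod.remove[of _ "i + 2"]) auto
  also have "?e ((0, 1), 0) * (?e ((1, i + 2), 0) * (?e (?relay (i + 2)) * ennreal (exp (- hi)) ^ (n - 1)))
      = ennreal (exp (-1)) * (ennreal (exp (-1)) * (ennreal (1 - exp (- lo)) * ennreal (exp (- hi)) ^ (n - 1)))"
  proof -
    have "?e ((0, 1), 0) = ennreal (exp (-1))" "?e ((1, i + 2), 0) = ennreal (exp (-1))"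
      using emeasure_exp1_greaterThan[of 1] by (simp_all add: handover_constraint_def)
    moreover have "?e (?relay (i + 2)) = ennreal (1 - exp (- lo))"
      using emeasure_exp1_atMost[OF lo] by (simp add: handover_constraint_def)
    ultimately show ?thesis by (simp only:)
  qed
  also have "\<dots> = ennreal (exp (-1) * exp (-1) * (1 - exp (- lo)) * exp (- hi) ^ (n - 1))"
    using lo by (simp add: ennreal_mult' ennreal_power mult.assoc)
  also have "exp (-1) * exp (-1) = exp (-2::real)" by (simp add: mult_exp_exp)
  finally show ?thesis .
qed

definition scale_event ::
    "nat \<Rightarrow> nat \<Rightarrow> real \<Rightarrow> real \<Rightarrow> nat \<times> nat
     \<Rightarrow> ((nat \<Rightarrow> real \<times> (nat \<Rightarrow> real)) \<times> ((nat \<times> nat) \<times> nat \<Rightarrow> real)) set" where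
  "scale_event m n lo hi p = angle_band_event m n (fst p) ((1/2)^snd p) \<times> handover_event n (fst p) lo hi"

lemma sets_scale_event: "i < n \<Longrightarrow> scale_event m n lo hi (i, s) \<in> sets (Omega m n)"
  unfolding scale_event_def Omega_eq_pair
  by (simp add: sets_angle_band_event sets_handover_event)

lemma emeasure_scale_event:
  assumes "2 \<le> m" "i < n" "0 \<le> lo" "0 \<le> hi"
  shows "emeasure (Omega m n) (scale_event m n lo hi (i, s))
           = ennreal ((1/2)^s / pi * (exp (-2) * (1 - exp (- lo)) * exp (- hi) ^ (n - 1)))"
proof -
  interpret contact: prob_space "contact_space n" by (rule prob_space_contact_space)
  have "(1/2::real)^s \<le> 1" by (simp add: power_le_one)
  then have "emeasure (Omega m n) (scale_event m n lo hi (i, s))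
      = ennreal ((1/2)^s / pi) * ennreal (exp (-2) * (1 - exp (- lo)) * exp (- hi) ^ (n - 1))"
    using assms unfolding scale_event_def Omega_eq_pair
    by (simp add: contact.emeasure_pair_measure_Times sets_angle_band_event sets_handover_event
        emeasure_angle_band_event emeasure_handover_event)
  then show ?thesis by (simp add: ennreal_mult'[symmetric])
qed

lemma dyadic_band_unique:
  fixes x :: real
  assumes "(1/2)^s/2 < x" "x \<le> (1/2)^s" "(1/2)^s'/2 < x" "x \<le> (1/2)^s'"
  shows "s = s'"
proof (rule ccontr)
  assume "s \<noteq> s'"
  then have "(1/2::real)^max s s' \<le> (1/2)^Suc (min s s')" by (intro power_decreasing) auto
  with assms show False by (cases "s \<le> s'") (auto simp: max_def min_def)
qed

lemma handover_events_disjoint: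
  assumes "lo < hi" "i < n" "i' < n" "i \<noteq> i'"
  shows "handover_event n i lo hi \<inter> handover_event n i' lo hi = {}"
proof -
  have contact: "((0, i + 2), 0) \<in> handover_contacts n i" "((0, i + 2), 0) \<in> handover_contacts n i'"
    using assms unfolding handover_contacts_def by auto
  have "E ((0, i + 2), 0) \<le> lo" "hi < E ((0, i + 2), 0)"
    if "E \<in> handover_event n i lo hi" "E \<in> handover_event n i' lo hi" for E
    using mem_handover_event[OF that(1) contact(1)] mem_handover_event[OF that(2) contact(2)] assms(4)
    by (auto simp: handover_constraint_def)
  then show ?thesis using assms(1) by fastforce
qed

lemma disjoint_family_on_scale_event:
  assumes "lo < hi"
  shows "disjoint_family_on (scale_event m n lo hi) ({..<n} \<times> UNIV)"
  unfolding disjoint_family_on_def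
proof (intro ballI impI)
  fix p q :: "nat \<times> nat" assume p: "p \<in> {..<n} \<times> UNIV" and q: "q \<in> {..<n} \<times> UNIV" and "p \<noteq> q"
  show "scale_event m n lo hi p \<inter> scale_event m n lo hi q = {}"
  proof (cases "fst p = fst q")
    case True
    then have "snd p \<noteq> snd q" using \<open>p \<noteq> q\<close> by (simp add: prod_eq_iff)
    then show ?thesis
      using p True angle_band_event_angle dyadic_band_unique
      unfolding scale_event_def by (fastforce simp: mem_Times_iff)
  next
    case False
    then have "handover_event n (fst p) lo hi \<inter> handover_event n (fst q) lo hi = {}"
      using p q by (intro handover_events_disjoint[OF assms]) auto
    then show ?thesis unfolding scale_event_def by auto
  qed
qed

lemma fm_delivery_time_ge_on_scale_event:
  fixes lam dl :: real
  defines "K \<equiv> rate_coeff lam dl"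
  assumes m: "2 \<le> m" and K: "0 < K" and dl: "0 < dl" and t: "0 < t" "t \<le> 1 / (K + dl)"
    and i: "i < n" and \<omega>: "regular_outcome n \<omega>" "\<omega> \<in> scale_event m n (K * t / 2) ((K + dl) * t) (i, s)"
  shows "1 / (K * (1/2)^s + dl) \<le> fm_delivery_time m lam dl n \<omega>"
proof -
  obtain P E where \<omega>_eq: "\<omega> = (P, E)" by (cases \<omega>)
  have P: "P \<in> angle_band_event m n i ((1/2)^s)" and E: "E \<in> handover_event n i (K * t / 2) ((K + dl) * t)"
    using \<omega>(2) unfolding \<omega>_eq scale_event_def by auto
  note contact = mem_handover_event[OF E]
  show ?thesis unfolding \<omega>_eq K_def
  proof (rule fm_delivery_time_ge_on_event[OF m _ dl i t[unfolded K_def]])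
    show "fst (P i) \<le> (1/2)^s" using angle_band_event_angle[OF P i] by simp
    show "1 < E ((0, 1), 0)" "1 < E ((1, i + 2), 0)" "E ((0, i + 2), 0) \<le> rate_coeff lam dl * t / 2"
      using contact[of "((0, 1), 0)"] contact[of "((1, i + 2), 0)"] contact[of "((0, i + 2), 0)"] i
      unfolding handover_contacts_def handover_constraint_def K_def by auto
    show "\<forall>k\<in>{2..n+1}. k \<noteq> i + 2 \<longrightarrow> (rate_coeff lam dl + dl) * t < E ((0, k), 0)"
    proof (intro ballI impI)
      fix k assume "k \<in> {2..n+1}" "k \<noteq> i + 2"
      then show "(rate_coeff lam dl + dl) * t < E ((0, k), 0)"
        using contact[of "((0, k), 0)"] unfolding handover_contacts_def handover_constraint_def K_def
        by auto
    qed
  qed (use K \<omega>(1) i in \<open>auto simp: K_def regular_outcome_def \<omega>_eq power_le_one\<close>)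
qed

section \<open>Lower bound on the expected delivery time\<close>

lemma nn_integral_ge_sum_disjoint:
  fixes A :: "'i \<Rightarrow> 'a set" and c :: "'i \<Rightarrow> ennreal"
  assumes "finite I" "disjoint_family_on A I" "\<And>p. p \<in> I \<Longrightarrow> A p \<in> sets M"
    and "AE x in M. \<forall>p\<in>I. x \<in> A p \<longrightarrow> c p \<le> f x"
  shows "(\<Sum>p\<in>I. c p * emeasure M (A p)) \<le> (\<integral>\<^sup>+x. f x \<partial>M)"
proof -
  have pointwise: "(\<Sum>p\<in>I. c p * indicator (A p) x) \<le> f x" if "\<forall>p\<in>I. x \<in> A p \<longrightarrow> c p \<le> f x" for x
  proof (cases "\<exists>p\<in>I. x \<in> A p")
    case True
    then obtain p where p: "p \<in> I" "x \<in> A p" by blast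
    have "x \<notin> A q" if "q \<in> I - {p}" for q
      using assms(2) p that unfolding disjoint_family_on_def by blast
    then have "(\<Sum>p\<in>I. c p * indicator (A p) x) = c p"
      using p assms(1) by (subst sum.remove[of I p]) (auto intro!: sum.neutral)
    then show ?thesis using p that by simp
  qed simp
  have "(\<Sum>p\<in>I. c p * emeasure M (A p)) = (\<integral>\<^sup>+x. (\<Sum>p\<in>I. c p * indicator (A p) x) \<partial>M)"
    using assms(3) by (subst nn_integral_sum) (auto simp: nn_integral_cmult_indicator)
  also have "\<dots> \<le> (\<integral>\<^sup>+x. f x \<partial>M)"
    using assms(4) by (intro nn_integral_mono_AE) (auto intro: pointwise)
  finally show ?thesis .
qed

lemma one_minus_exp_ge_half: "0 \<le> x \<Longrightarrow> x \<le> 1 \<Longrightarrow> x / 2 \<le> 1 - exp (- x :: real)"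
proof -
  assume x: "0 \<le> x" "x \<le> 1"
  have "exp (- x) \<le> 1 / (1 + x)"
    using exp_ge_add_one_self[of x] x by (simp add: exp_minus field_simps)
  also have "\<dots> \<le> 1 - x / 2" using x by (simp add: field_simps) (smt (verit) mult_left_le)
  finally show ?thesis by linarith
qed

text \<open>The scale-s event has probability of order 2^(-s) K t and forces a delay of order 2^s / K;
  their product does not depend on s.\<close>
lemma scale_contribution_ge:
  assumes K: "0 < K" and dl: "0 < dl" and t: "t = 1 / (real (n + 1) * (K + dl))"
    and a: "0 < a" "dl \<le> K * a"
  shows "exp (-3) * t / (8 * pi)
           \<le> 1 / (K * a + dl) * (a / pi * (exp (-2) * (1 - exp (- (K * t / 2))) * exp (- ((K + dl) * t)) ^ (n - 1)))"
proof -
  have Rt: "(K + dl) * t = 1 / real (n + 1)" using t K dl by simp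
  have tp: "0 < t" using t K dl by simp
  have delay: "1 / (2 * K) \<le> a / (K * a + dl)" using K a dl by (simp add: field_simps)
  have first_contact: "K * t / 4 \<le> 1 - exp (- (K * t / 2))"
  proof -
    have "K * t \<le> (K + dl) * t" using dl tp by (simp add: mult_right_mono)
    moreover have "1 / real (n + 1) \<le> 1" by simp
    ultimately have "K * t / 2 \<le> 1" using Rt by linarith
    then show ?thesis using one_minus_exp_ge_half[of "K * t / 2"] K tp by simp
  qed
  have other_contacts: "exp (-1) \<le> exp (- ((K + dl) * t)) ^ (n - 1)"
  proof -
    have "real (n - 1) * ((K + dl) * t) \<le> real (n + 1) * ((K + dl) * t)"
      using K dl tp by (intro mult_right_mono) auto
    then have "real (n - 1) * ((K + dl) * t) \<le> 1" using Rt by simp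
    then show ?thesis by (simp add: exp_of_nat_mult[symmetric])
  qed
  have "exp (-3) * t / (8 * pi) = (1 / (2 * K)) * (1 / pi) * (exp (-2) * (K * t / 4) * exp (-1))"
    using K by (simp add: field_simps mult_exp_exp)
  also have "\<dots> \<le> (a / (K * a + dl)) * (1 / pi) * (exp (-2) * (1 - exp (- (K * t / 2))) * exp (- ((K + dl) * t)) ^ (n - 1))"
    using delay first_contact other_contacts K tp a dl by (intro mult_mono mult_nonneg_nonneg) auto
  also have "\<dots> = 1 / (K * a + dl) * (a / pi * (exp (-2) * (1 - exp (- (K * t / 2))) * exp (- ((K + dl) * t)) ^ (n - 1)))"
    by simp
  finally show ?thesis .
qed

lemma scale_event_contribution_ge:
  assumes m: "2 \<le> m" and K: "0 < K" and dl: "0 < dl" and t: "t = 1 / (real (n + 1) * (K + dl))"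
    and i: "i < n" and s: "dl \<le> K * (1/2)^s"
  shows "ennreal (exp (-3) * t / (8 * pi))
           \<le> ennreal (1 / (K * (1/2)^s + dl)) * emeasure (Omega m n) (scale_event m n (K * t / 2) ((K + dl) * t) (i, s))"
proof -
  have "0 < t" using t K dl by simp
  then show ?thesis
    using scale_contribution_ge[OF K dl t _ s] K dl
    by (simp add: emeasure_scale_event[OF m i] ennreal_mult'[symmetric] ennreal_leI)
qed

lemma expected_fm_time_ge_scales:
  fixes lam dl :: real
  defines "K \<equiv> rate_coeff lam dl"
  assumes m: "2 \<le> m" and K: "0 < K" and dl: "0 < dl" and n: "1 \<le> n" and S: "dl \<le> K * (1/2)^S"
  shows "ennreal (real (S + 1) * exp (-3) / (16 * pi * (K + dl)))
           \<le> (\<integral>\<^sup>+\<omega>. ennreal (fm_delivery_time m lam dl n \<omega>) \<partial>Omega m n)"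
proof -
  define t where "t = 1 / (real (n + 1) * (K + dl))"
  define v where "v = exp (-3) * t / (8 * pi)"
  define I where "I = {..<n} \<times> {..S}"
  define c where "c p = ennreal (1 / (K * (1/2)^snd p + dl))" for p :: "nat \<times> nat"
  let ?A = "scale_event m n (K * t / 2) ((K + dl) * t)"
  have t: "0 < t" "t \<le> 1 / (K + dl)"
    using K dl unfolding t_def by (auto intro!: divide_left_mono mult_pos_pos)
  have "real (n + 1) * (K + dl) \<le> (2 * real n) * (K + dl)"
    using n K dl by (intro mult_right_mono) auto
  then have nt: "1 / (2 * (K + dl)) \<le> real n * t"
    using n K dl unfolding t_def by (simp add: field_simps)
  have "real (S + 1) * exp (-3) / (16 * pi * (K + dl))
      = real (S + 1) * exp (-3) / (8 * pi) * (1 / (2 * (K + dl)))" by simp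
  also have "\<dots> \<le> real (S + 1) * exp (-3) / (8 * pi) * (real n * t)"
    using nt by (intro mult_left_mono) auto
  also have "\<dots> = real (card I) * v"
    unfolding I_def v_def by (simp add: algebra_simps)
  finally have "ennreal (real (S + 1) * exp (-3) / (16 * pi * (K + dl))) \<le> (\<Sum>p\<in>I. ennreal v)"
    using t unfolding v_def by (simp add: ennreal_leI ennreal_of_nat_eq_real_of_nat ennreal_mult'[symmetric])
  also have "\<dots> \<le> (\<Sum>p\<in>I. c p * emeasure (Omega m n) (?A p))"
  proof (rule sum_mono)
    fix p assume "p \<in> I"
    then obtain i s where p: "p = (i, s)" "i < n" "s \<le> S" unfolding I_def by auto
    have "(1/2::real)^S \<le> (1/2)^s" using p by (intro power_decreasing) auto
    then have "dl \<le> K * (1/2)^s" using S K by (smt (verit) mult_left_mono)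
    then show "ennreal v \<le> c p * emeasure (Omega m n) (?A p)"
      using scale_event_contribution_ge[OF m K dl t_def p(2)] unfolding v_def c_def p(1) by simp
  qed
  also have "\<dots> \<le> (\<integral>\<^sup>+\<omega>. ennreal (fm_delivery_time m lam dl n \<omega>) \<partial>Omega m n)"
  proof (rule nn_integral_ge_sum_disjoint)
    show "disjoint_family_on ?A I"
      using K dl t unfolding I_def
      by (intro disjoint_family_on_mono[OF _ disjoint_family_on_scale_event]) auto
    show "AE \<omega> in Omega m n. \<forall>p\<in>I. \<omega> \<in> ?A p \<longrightarrow> c p \<le> ennreal (fm_delivery_time m lam dl n \<omega>)"
      using AE_regular_outcome[OF m] unfolding I_def c_def
      by eventually_elim
        (auto intro!: ennreal_leI fm_delivery_time_ge_on_scale_event[OF m K[unfolded K_def] dl t[unfolded K_def]]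
          simp: K_def)
  qed (auto simp: I_def sets_scale_event)
  finally show ?thesis .
qed

lemma dyadic_floor_log_bounds:
  fixes x :: real
  assumes "1 \<le> x"
  shows "2 ^ nat \<lfloor>log 2 x\<rfloor> \<le> x" "ln x \<le> real (nat \<lfloor>log 2 x\<rfloor> + 1)"
proof -
  have S: "real (nat \<lfloor>log 2 x\<rfloor>) = of_int \<lfloor>log 2 x\<rfloor>" using assms by simp
  have "(2::real) ^ nat \<lfloor>log 2 x\<rfloor> = 2 powr of_int \<lfloor>log 2 x\<rfloor>" by (simp add: powr_realpow[symmetric] S)
  also have "\<dots> \<le> 2 powr log 2 x" by (intro powr_mono) auto
  finally show "2 ^ nat \<lfloor>log 2 x\<rfloor> \<le> x" using assms by simp
  have "ln x \<le> log 2 x"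
    using assms ln_2_less_1 unfolding log_def by (simp add: le_divide_eq mult_left_le)
  then show "ln x \<le> real (nat \<lfloor>log 2 x\<rfloor> + 1)" using S by linarith
qed

lemma expected_fm_time_ge_ln:
  assumes m: "2 \<le> m" and lam: "0 < lam" and dl: "0 < dl" "dl \<le> lam/2" "dl \<le> (lam/2)^2"
    and n: "1 \<le> n"
  shows "ennreal (exp (-3) / (64 * pi * lam) * ln (1 / dl))
           \<le> (\<integral>\<^sup>+\<omega>. ennreal (fm_delivery_time m lam dl n \<omega>) \<partial>Omega m n)"
proof -
  define K where "K = rate_coeff lam dl"
  define x where "x = lam / (2 * dl)"
  define S where "S = nat \<lfloor>log 2 x\<rfloor>"
  have K: "lam/2 \<le> K" "K + dl \<le> 2 * lam"
    using dl pi_gt3 pi_less_4 mult_right_mono[of "pi/2" 2 "lam - dl"]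
      mult_right_mono[of 1 "pi/2" "lam - dl"]
    unfolding K_def rate_coeff_def by auto
  have x: "1 \<le> x" unfolding x_def using dl by (simp add: field_simps)
  have "dl = (lam/2) / x" unfolding x_def using dl lam by (simp add: field_simps)
  also have "\<dots> \<le> (lam/2) / 2^S"
    unfolding S_def using dyadic_floor_log_bounds(1)[OF x] x lam by (intro divide_left_mono) auto
  also have "\<dots> \<le> K * (1/2)^S" using divide_right_mono[OF K(1), of "2^S"] by (simp add: power_one_over)
  finally have "ennreal (real (S + 1) * exp (-3) / (16 * pi * (K + dl)))
      \<le> (\<integral>\<^sup>+\<omega>. ennreal (fm_delivery_time m lam dl n \<omega>) \<partial>Omega m n)"
    using expected_fm_time_ge_scales[OF m _ dl(1) n] K lam unfolding K_def by simp
  moreover have "exp (-3) / (64 * pi * lam) * ln (1 / dl) \<le> real (S + 1) * exp (-3) / (16 * pi * (K + dl))"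
  proof -
    have "ln dl \<le> ln ((lam/2)^2)" using dl lam by simp
    then have "ln dl \<le> 2 * ln (lam/2)" using lam by (simp add: ln_realpow)
    then have "ln (1 / dl) / 2 \<le> ln x"
      unfolding x_def using lam dl by (simp add: ln_div ln_mult)
    then have "ln (1 / dl) / 2 \<le> real (S + 1)"
      using dyadic_floor_log_bounds(2)[OF x] unfolding S_def by linarith
    then have "exp (-3) / (64 * pi * lam) * ln (1 / dl) \<le> real (S + 1) * (exp (-3) / (32 * pi * lam))"
      using mult_right_mono[of "ln (1 / dl) / 2" "real (S + 1)" "exp (-3) / (32 * pi * lam)"] lam
      by (simp add: mult_ac)
    also have "\<dots> \<le> real (S + 1) * exp (-3) / (16 * pi * (K + dl))"
      using K lam dl by (simp add: divide_left_mono)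
    finally show ?thesis .
  qed
  ultimately show ?thesis by (meson ennreal_leI order_trans)
qed

lemma tendsto_top_if_ge_ln_inverse:
  fixes f :: "nat \<Rightarrow> ennreal" and \<delta> :: "nat \<Rightarrow> real"
  assumes c: "0 < c" and \<delta>: "\<forall>n. 0 < \<delta> n" "\<delta> \<longlonglongrightarrow> 0"
    and f: "\<forall>\<^sub>F n in sequentially. ennreal (c * ln (1 / \<delta> n)) \<le> f n"
  shows "(f \<longlongrightarrow> \<infinity>) sequentially"
proof (rule tendsto_sandwich[OF f _ _ tendsto_const])
  have "LIM n sequentially. inverse (\<delta> n) :> at_top"
    using \<delta> by (intro filterlim_inverse_at_top) auto
  then have "LIM n sequentially. c * ln (1 / \<delta> n) :> at_top"
    using c by (auto intro!: filterlim_tendsto_pos_mult_at_top filterlim_compose[OF ln_at_top]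
        simp: inverse_eq_divide)
  then show "(\<lambda>n. ennreal (c * ln (1 / \<delta> n))) \<longlonglongrightarrow> \<infinity>"
    by (simp add: ennreal_tendsto_top_eq_at_top)
qed simp

theorem theorem1:
  fixes m :: nat and lam :: real and \<delta> :: "nat \<Rightarrow> real"
  assumes "2 \<le> m" and "0 < lam" and "\<forall>n. 0 < \<delta> n" and "\<delta> \<longlonglongrightarrow> 0"
  shows "(\<exists>c c'. 0 < c \<and> 0 < c' \<and>
            (\<forall>\<^sub>F n in sequentially.
               expected_fm_time m lam \<delta> n
                 \<ge> ennreal (min (c * ln (1 / \<delta> n)) (c' * real n / ln (real n)))))
         \<and> (expected_fm_time m lam \<delta> \<longlongrightarrow> \<infinity>) sequentially"
proof -
  define c where "c = exp (-3) / (64 * pi * lam)"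
  have c: "0 < c" unfolding c_def using assms(2) by simp
  have "\<forall>\<^sub>F n in sequentially. \<delta> n < min (lam/2) ((lam/2)^2)"
    using order_tendstoD(2)[OF assms(4), of "min (lam/2) ((lam/2)^2)"] assms(2) by simp
  then have ln_bound: "\<forall>\<^sub>F n in sequentially. ennreal (c * ln (1 / \<delta> n)) \<le> expected_fm_time m lam \<delta> n"
    using eventually_ge_at_top[of 1]
    unfolding c_def expected_fm_time_def
    by eventually_elim (rule expected_fm_time_ge_ln; use assms in auto)
  then have "\<forall>\<^sub>F n in sequentially.
      expected_fm_time m lam \<delta> n \<ge> ennreal (min (c * ln (1 / \<delta> n)) (1 * real n / ln (real n)))"
    by eventually_elim (meson ennreal_leI min.cobounded1 order_trans)
  then show ?thesis
    using c zero_less_one tendsto_top_if_ge_ln_inverse[OF c assms(3,4) ln_bound] by blast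
qed

end
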